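(* Let $\mathbb{K}$ be a field and $f=a_0(x)+a_1(x)y+\cdots+a_n(x)y^n\in\mathbb{K}[x,y]$ with $n\geq 2$, $a_0,\ldots,a_{n-1}\in\mathbb{K}[x]$, $a_n\in\mathbb{K}$, $a_0a_n\neq 0$, and suppose there exists an index $j$ with $0\leq j\leq n-1$ such that $\deg a_j>\max_{i\neq j}\deg a_i$. Then $f$ is a product of at most $n-j$ irreducible polynomials over $\mathbb{K}[x]$. In particular, if $j=n-1$, then $f$ is irreducible over $\mathbb{K}[x]$.
   Context: $f$ is regarded as a polynomial in $y$ with coefficients in $\mathbb{K}[x]$; "a product of at most $k$ irreducible polynomials over $\mathbb{K}[x]$" means that in the factorization of $f$ into irreducible elements of $\mathbb{K}[x][y]$ the number of factors, counted with multiplicities, is at most $k$. *)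

theory Defs
  imports "HOL-Computational_Algebra.Polynomial_Factorial"
begin

end

(*
  Write f in K[x][y] as a polynomial in y and let xlead f in K[y] collect the coefficients
  of the highest power of x occurring in f. Taking x-leading parts is multiplicative, so
  the order of vanishing of xlead at y = 0 is additive over any factorization. The
  dominance of a_j makes xlead f = c y^j, of order j. An irreducible factor g of f has
  constant leading coefficient and nonzero constant term, and this forces
  order 0 (xlead g) < deg_y g. Summing over the factors: #factors + j <= n.
*)
theory Submission
  imports Defs
begin

lemma coeff_mult_degree_le_sum:
  fixes a b :: "'a::comm_semiring_0 poly"
  assumes "degree a \<le> d" "degree b \<le> e"
  shows "coeff (a * b) (d + e) = coeff a d * coeff b e"
proof (cases "degree a = d \<and> degree b = e")
  case True
  then show ?thesis using coeff_mult_degree_sum by blast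
next
  case False
  then have "degree a < d \<or> degree b < e" using assms by linarith
  moreover have "degree (a * b) < d + e" if "degree a < d \<or> degree b < e"
    using that assms degree_mult_le[of a b] by linarith
  ultimately show ?thesis by (auto simp: coeff_eq_0)
qed

text \<open>In \<^typ>\<open>'a poly poly\<close> the outer variable is y and the inner one x:
  \<open>xcoeff d p\<close> is the coefficient of x^d in p, as a polynomial in y.\<close>

definition xcoeff :: "nat \<Rightarrow> 'a::zero poly poly \<Rightarrow> 'a poly" where
  "xcoeff d p = map_poly (\<lambda>a. coeff a d) p"

definition xdegree :: "'a::zero poly poly \<Rightarrow> nat" where
  "xdegree p = (MAX i\<in>{..degree p}. degree (coeff p i))"

definition xlead :: "'a::zero poly poly \<Rightarrow> 'a poly" where
  "xlead p = xcoeff (xdegree p) p"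

lemma coeff_xcoeff [simp]: "coeff (xcoeff d p) i = coeff (coeff p i) d"
  by (simp add: xcoeff_def coeff_map_poly)

lemma degree_coeff_le_xdegree: "degree (coeff p i) \<le> xdegree p"
  by (cases "i \<le> degree p") (auto simp: xdegree_def coeff_eq_0)

lemma xdegree_le: "(\<And>i. degree (coeff p i) \<le> d) \<Longrightarrow> xdegree p \<le> d"
  by (simp add: xdegree_def)

lemma le_xdegree: "xcoeff d p \<noteq> 0 \<Longrightarrow> d \<le> xdegree p"
  by (metis coeff_xcoeff le_degree le_trans degree_coeff_le_xdegree poly_eqI coeff_0)

lemma xdegree_attained:
  assumes "p \<noteq> 0"
  obtains i where "coeff p i \<noteq> 0" "degree (coeff p i) = xdegree p"
proof -
  have "xdegree p \<in> (\<lambda>i. degree (coeff p i)) ` {..degree p}"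
    unfolding xdegree_def by (rule Max_in) auto
  then obtain i where "degree (coeff p i) = xdegree p" by auto
  show thesis
  proof (cases "coeff p i = 0")
    case True
    with \<open>degree (coeff p i) = xdegree p\<close> have "degree (lead_coeff p) = xdegree p"
      using degree_coeff_le_xdegree[of p "degree p"] by simp
    with assms show thesis by (intro that[of "degree p"]) simp_all
  qed (use that \<open>degree (coeff p i) = xdegree p\<close> in blast)
qed

lemma xlead_eq_0_iff [simp]: "xlead p = 0 \<longleftrightarrow> p = 0"
proof (cases "p = 0")
  case False
  then obtain i where "coeff p i \<noteq> 0" "degree (coeff p i) = xdegree p"
    by (rule xdegree_attained)
  then have "coeff (xlead p) i \<noteq> 0" by (metis coeff_xcoeff leading_coeff_0_iff xlead_def)
  with False show ?thesis by auto
qed (simp add: xlead_def xcoeff_def)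

lemma xcoeff_mult:
  fixes p q :: "'a::comm_semiring_0 poly poly"
  assumes "\<And>i. degree (coeff p i) \<le> d" "\<And>i. degree (coeff q i) \<le> e"
  shows "xcoeff (d + e) (p * q) = xcoeff d p * xcoeff e q"
proof (rule poly_eqI)
  fix k
  show "coeff (xcoeff (d + e) (p * q)) k = coeff (xcoeff d p * xcoeff e q) k"
    unfolding coeff_xcoeff coeff_mult[of p q] coeff_mult[of "xcoeff d p"] coeff_sum
    by (simp add: coeff_mult_degree_le_sum assms)
qed

lemma degree_coeff_mult_le:
  fixes p q :: "'a::comm_semiring_0 poly poly"
  shows "degree (coeff (p * q) k) \<le> xdegree p + xdegree q"
  unfolding coeff_mult
  by (intro degree_sum_le order.trans[OF degree_mult_le] add_mono degree_coeff_le_xdegree) simp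

lemma xdegree_mult:
  fixes p q :: "'a::idom poly poly"
  assumes "p \<noteq> 0" "q \<noteq> 0"
  shows "xdegree (p * q) = xdegree p + xdegree q"
proof (rule antisym)
  show "xdegree (p * q) \<le> xdegree p + xdegree q"
    by (intro xdegree_le degree_coeff_mult_le)
  have "xcoeff (xdegree p + xdegree q) (p * q) = xlead p * xlead q"
    by (simp add: xlead_def xcoeff_mult degree_coeff_le_xdegree)
  with assms show "xdegree p + xdegree q \<le> xdegree (p * q)"
    by (intro le_xdegree) simp
qed

lemma xlead_mult:
  fixes p q :: "'a::idom poly poly"
  shows "xlead (p * q) = xlead p * xlead q"
proof (cases "p = 0 \<or> q = 0")
  case False
  then show ?thesis
    by (simp add: xlead_def xdegree_mult xcoeff_mult degree_coeff_le_xdegree)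
qed (auto simp: xlead_def xcoeff_def)

lemma xlead_dominant_coeff:
  fixes p :: "'a::zero poly poly"
  assumes "j \<le> degree p" "\<forall>i\<le>degree p. i \<noteq> j \<longrightarrow> degree (coeff p i) < degree (coeff p j)"
  shows "xlead p = monom (lead_coeff (coeff p j)) j"
proof -
  have "degree (coeff p i) \<le> degree (coeff p j)" for i
    using assms(2) by (cases "i \<le> degree p") (auto simp: coeff_eq_0 less_imp_le)
  then have "xdegree p = degree (coeff p j)"
    by (intro antisym xdegree_le degree_coeff_le_xdegree)
  moreover have "coeff (coeff p i) (degree (coeff p j)) = 0" if "i \<noteq> j" for i
    using assms(2) that by (cases "i \<le> degree p") (auto simp: coeff_eq_0)
  ultimately show ?thesis
    by (intro poly_eqI) (simp add: xlead_def)
qed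

lemma order_xlead_less_degree:
  fixes g :: "'a::idom poly poly"
  assumes "degree g > 0" "coeff g 0 \<noteq> 0" "degree (lead_coeff g) = 0"
  shows "order 0 (xlead g) < degree g"
proof (rule ccontr)
  assume "\<not> order 0 (xlead g) < degree g"
  moreover have "order 0 (xlead g) \<le> degree (xlead g)"
    using assms(2) by (intro order_degree) auto
  moreover have "degree (xlead g) \<le> degree g"
    unfolding xlead_def xcoeff_def by (rule map_poly_degree_leq)
  ultimately have deg: "degree (xlead g) = degree g" and ord: "order 0 (xlead g) > 0"
    using assms(1) by linarith+
  have "xlead g \<noteq> 0"
    using assms(2) by auto
  then have "coeff (xlead g) (degree g) \<noteq> 0"
    using deg by (metis leading_coeff_0_iff)
  then have "coeff (lead_coeff g) (xdegree g) \<noteq> 0"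
    by (simp add: xlead_def)
  then have "xdegree g = 0"
    using le_degree[of "lead_coeff g" "xdegree g"] assms(3) by simp
  then have "degree (coeff g 0) = 0"
    using degree_coeff_le_xdegree le_zero_eq by metis
  then have "coeff (coeff g 0) 0 \<noteq> 0"
    using assms(2) leading_coeff_0_iff[of "coeff g 0"] by simp
  then have "poly (xlead g) 0 \<noteq> 0"
    by (simp add: poly_0_coeff_0 xlead_def \<open>xdegree g = 0\<close>)
  with ord show False
    by (simp add: order_0I)
qed

lemma is_unit_poly_poly_iff:
  fixes p :: "'a::field poly poly"
  shows "is_unit p \<longleftrightarrow> p \<noteq> 0 \<and> degree p = 0 \<and> degree (lead_coeff p) = 0"
proof
  assume "is_unit p"
  then obtain c where "p = [:c:]" "is_unit c"
    by (auto simp: is_unit_poly_iff)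
  moreover have "c \<noteq> 0"
    using \<open>is_unit c\<close> by auto
  ultimately show "p \<noteq> 0 \<and> degree p = 0 \<and> degree (lead_coeff p) = 0"
    by (simp add: is_unit_iff_degree)
next
  assume p: "p \<noteq> 0 \<and> degree p = 0 \<and> degree (lead_coeff p) = 0"
  moreover have "lead_coeff p \<noteq> 0"
    using p leading_coeff_0_iff by blast
  ultimately have "is_unit (lead_coeff p)"
    using is_unit_iff_degree by blast
  with p show "is_unit p"
    by (metis degree_0_id is_unit_const_poly_iff)
qed

lemma irreducible_factorization_exists_measure:
  fixes N :: "'a::semidom \<Rightarrow> nat" and x :: 'a
  assumes N_mult: "\<And>a b. a \<noteq> 0 \<Longrightarrow> b \<noteq> 0 \<Longrightarrow> N (a * b) = N a + N b"
    and N_zero: "\<And>a. a \<noteq> 0 \<Longrightarrow> N a = 0 \<Longrightarrow> a dvd 1"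
    and "x \<noteq> 0" "\<not> x dvd 1"
  shows "\<exists>fs. (\<forall>g\<in>#fs. irreducible g) \<and> x = prod_mset fs"
  using assms(3,4)
proof (induction "N x" arbitrary: x rule: less_induct)
  case less
  show ?case
  proof (cases "irreducible x")
    case True
    then show ?thesis by (intro exI[of _ "{#x#}"]) simp
  next
    case False
    then obtain a b where ab: "x = a * b" "\<not> a dvd 1" "\<not> b dvd 1"
      using less.prems by (auto simp: irreducible_def)
    with less.prems have "a \<noteq> 0" "b \<noteq> 0" by auto
    have "N x = N a + N b"
      using N_mult ab(1) \<open>a \<noteq> 0\<close> \<open>b \<noteq> 0\<close> by blast
    moreover have "N a \<noteq> 0" "N b \<noteq> 0"
      using N_zero ab(2,3) \<open>a \<noteq> 0\<close> \<open>b \<noteq> 0\<close> by blast+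
    ultimately have "N a < N x" "N b < N x" by linarith+
    then obtain fa fb where "\<forall>g\<in>#fa. irreducible g" "a = prod_mset fa"
        "\<forall>g\<in>#fb. irreducible g" "b = prod_mset fb"
      using less.hyps \<open>a \<noteq> 0\<close> \<open>b \<noteq> 0\<close> ab by meson
    with ab show ?thesis by (intro exI[of _ "fa + fb"]) auto
  qed
qed

lemma irreducible_factorization_exists_poly_poly:
  fixes f :: "'a::field poly poly"
  assumes "f \<noteq> 0" "\<not> is_unit f"
  shows "\<exists>fs. (\<forall>g\<in>#fs. irreducible g) \<and> f = prod_mset fs"
proof (rule irreducible_factorization_exists_measure[where N = "\<lambda>p. degree p + degree (lead_coeff p)"])
  fix a b :: "'a poly poly"
  assume "a \<noteq> 0" "b \<noteq> 0"
  then show "degree (a * b) + degree (lead_coeff (a * b)) =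
      degree a + degree (lead_coeff a) + (degree b + degree (lead_coeff b))"
    by (simp add: degree_mult_eq coeff_mult_degree_sum)
next
  fix a :: "'a poly poly"
  assume "a \<noteq> 0" "degree a + degree (lead_coeff a) = 0"
  then show "is_unit a"
    by (metis add_is_0 is_unit_poly_poly_iff)
qed (use assms in auto)

lemma size_irreducible_factors_le:
  fixes fs :: "'a::field poly poly multiset"
  assumes "\<forall>g\<in>#fs. irreducible g" "coeff (prod_mset fs) 0 \<noteq> 0"
    and "degree (lead_coeff (prod_mset fs)) = 0"
  shows "size fs + order 0 (xlead (prod_mset fs)) \<le> degree (prod_mset fs)"
  using assms
proof (induction fs)
  case empty
  have "xlead (1 :: 'a poly poly) = 1"
    by (rule poly_eqI) (simp add: xlead_def xdegree_def)
  then show ?case by (simp add: order_0I)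
next
  case (add g fs)
  let ?P = "prod_mset fs"
  have "coeff g 0 * coeff ?P 0 \<noteq> 0"
    using add.prems(2) by (simp add: coeff_mult_0)
  then have g0: "coeff g 0 \<noteq> 0" and P0: "coeff ?P 0 \<noteq> 0" by auto
  then have "g \<noteq> 0" "?P \<noteq> 0" by (metis coeff_0)+
  moreover have "degree (lead_coeff g * lead_coeff ?P) = 0"
    using add.prems(3) by (simp add: lead_coeff_mult)
  ultimately have lc_g: "degree (lead_coeff g) = 0" and lc_P: "degree (lead_coeff ?P) = 0"
    by (simp_all add: degree_mult_eq)
  have "\<not> is_unit g"
    using add.prems(1) by (simp add: irreducible_not_unit)
  with \<open>g \<noteq> 0\<close> lc_g have "degree g > 0"
    by (simp add: is_unit_poly_poly_iff)
  then have "order 0 (xlead g) < degree g"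
    using g0 lc_g by (rule order_xlead_less_degree)
  moreover have "size fs + order 0 (xlead ?P) \<le> degree ?P"
    using add.IH add.prems(1) P0 lc_P by simp
  moreover have "order 0 (xlead (g * ?P)) = order 0 (xlead g) + order 0 (xlead ?P)"
    using \<open>g \<noteq> 0\<close> \<open>?P \<noteq> 0\<close> by (simp add: xlead_mult order_mult)
  ultimately show ?case
    using \<open>g \<noteq> 0\<close> \<open>?P \<noteq> 0\<close> by (simp add: degree_mult_eq)
qed

theorem theorem5:
  fixes f :: "'a :: field poly poly" and n j :: nat
  assumes "degree f = n" and "n \<ge> 2"
    and "degree (coeff f n) = 0"
    and "coeff f 0 \<noteq> 0" and "coeff f n \<noteq> 0"
    and "j < n"
    and "\<forall>i\<le>n. i \<noteq> j \<longrightarrow> degree (coeff f i) < degree (coeff f j)"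
  shows "(\<exists>fs :: 'a poly poly multiset. (\<forall>g\<in>#fs. irreducible g) \<and> f = prod_mset fs \<and> size fs \<le> n - j)
         \<and> (j = n - 1 \<longrightarrow> irreducible f)"
proof -
  have "f \<noteq> 0" "\<not> is_unit f"
    using assms(1,2,5) by (auto simp: is_unit_poly_poly_iff)
  then obtain fs where irr: "\<forall>g\<in>#fs. irreducible g" and f: "f = prod_mset fs"
    using irreducible_factorization_exists_poly_poly by blast
  have "degree (coeff f n) < degree (coeff f j)"
    using assms(6,7) by simp
  then have "coeff f j \<noteq> 0" by auto
  moreover have "xlead f = monom (lead_coeff (coeff f j)) j"
    using assms(1,6,7) by (intro xlead_dominant_coeff) simp_all
  ultimately have "order 0 (xlead f) = j" by simp
  then have size: "size fs + j \<le> n"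
    using size_irreducible_factors_le[OF irr] assms(1,3,4) f by simp
  moreover have "irreducible f" if "j = n - 1"
  proof -
    have "fs \<noteq> {#}" using f assms(1,2) by auto
    moreover have "size fs \<le> 1"
      using size that assms(6) by linarith
    ultimately obtain g where "fs = {#g#}"
      by (metis One_nat_def le_antisym less_one not_le size_1_singleton_mset size_eq_0_iff_empty)
    with irr f show ?thesis by simp
  qed
  ultimately show ?thesis
    using irr f by auto
qed

end
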